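(* Let $\epsilon=\epsilon_1\cdots\epsilon_n$ be a sequence and let $\epsilon'$ be the sequence obtained by applying Algorithm A (described below) to $\epsilon$. Then $\operatorname{Em}(p,\epsilon)=\operatorname{Em}(q,\epsilon')$ and $\operatorname{Em}(q,\epsilon)=\operatorname{Em}(p,\epsilon')$; that is, the algorithm exchanges the occurrences of $p=\underline{0102}$ and $q=\underline{0112}$.
   Context: The reduction of an integer word replaces each occurrence of its $k$-th smallest distinct value by $k-1$; a consecutive pattern $\underline{p_1p_2p_3p_4}$ occurs in a sequence at position $i$ if the reduction of its entries in positions $i,\dots,i+3$ equals $p_1p_2p_3p_4$, and $\operatorname{Em}(p,\epsilon)$ denotes the set of positions of occurrences of $p$ in $\epsilon$. Let $p=\underline{0102}$ and $q=\underline{0112}$. Algorithm A, on input an integer sequence $\mathrm{seq}=\epsilon_1\cdots\epsilon_n$: let $E_p$, $E_q$ be the sets of positions of occurrences of $p$, resp. $q$, in the input sequence; set $\mathrm{last}:=$ null. For $i=1,2,\dots,n$ in order: let $N_p,N_q$ be the sets of positions of occurrences of $p$, resp. $q$, in the current sequence. If $i-2\in E_p$: set $\mathrm{last}:=\mathrm{seq}[i]$ and $\mathrm{seq}[i]:=\mathrm{seq}[i-1]$. Else if $i-2\in E_q$: set $\mathrm{last}:=\mathrm{seq}[i]$ and $\mathrm{seq}[i]:=\mathrm{seq}[i-2]$. Else if $i-2\in N_p$ or $i-2\in N_q$: swap the values of $\mathrm{seq}[i]$ and $\mathrm{last}$. Output $\mathrm{seq}$. *)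

theory Defs
  imports Main
begin

definition red :: "int list \<Rightarrow> nat list" where
  "red w = map (\<lambda>x. card {y \<in> set w. y < x}) w"

text \<open>Positions (1-indexed) of occurrences of a consecutive pattern of length 4.\<close>
definition Em :: "nat list \<Rightarrow> int list \<Rightarrow> nat set" where
  "Em pat s = {i. 1 \<le> i \<and> i + 3 \<le> length s \<and> red (take 4 (drop (i - 1) s)) = pat}"

definition pat_p :: "nat list" where "pat_p = [0, 1, 0, 2]"
definition pat_q :: "nat list" where "pat_q = [0, 1, 1, 2]"

text \<open>One step (index i, 1-indexed) of Algorithm A. State: current sequence and
  the variable last (None = null). seq[j] (1-indexed) is s ! (j-1).\<close>
definition algA_step :: "nat set \<Rightarrow> nat set \<Rightarrow> nat \<Rightarrow> int list \<times> int option \<Rightarrow> int list \<times> int option" where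
  "algA_step Ep Eq i st =
     (let s = fst st; last = snd st in
      if i \<ge> 3 \<and> i - 2 \<in> Ep then (s[i - 1 := s ! (i - 2)], Some (s ! (i - 1)))
      else if i \<ge> 3 \<and> i - 2 \<in> Eq then (s[i - 1 := s ! (i - 3)], Some (s ! (i - 1)))
      else if i \<ge> 3 \<and> (i - 2 \<in> Em pat_p s \<or> i - 2 \<in> Em pat_q s) then
        (case last of None \<Rightarrow> (s, last)
         | Some v \<Rightarrow> (s[i - 1 := v], Some (s ! (i - 1))))
      else (s, last))"

definition algA :: "int list \<Rightarrow> int list" where
  "algA xs = fst (fold (algA_step (Em pat_p xs) (Em pat_q xs)) [1..<length xs + 1] (xs, None))"

end

(*
  Index positions from 0; the window starting at k is examined at the step that rewrites
  position k + 2. Call position i active if at that moment the input or the partially rewritten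
  sequence has an occurrence of p or q at i - 2. The last two letters of an occurrence increase,
  so xs ! i < xs ! (i + 1) at every active i; by strong induction also algA xs ! i < xs ! (i + 1),
  and afterwards last holds xs ! i. Hence no two consecutive positions are active, and a spurious
  occurrence at k (present in the rewritten sequence but not in the input) forces k to be active,
  so the swap writes xs ! k at position k + 2, which destroys the occurrence. At a genuine
  occurrence the second and fourth letters survive and the third copies the second (p becomes q)
  or the first (q becomes p); elsewhere no new occurrence can appear.
*)
theory Submission imports Defs begin

lemma card_less_strict_mono:
  fixes w :: "'a::linorder list"
  assumes "x \<in> set w" "x < y"
  shows "card {z \<in> set w. z < x} < card {z \<in> set w. z < y}"
  by (rule psubset_card_mono) (use assms in auto)

lemma card_less_mono:
  fixes w :: "'a::linorder list"
  assumes "x \<le> y"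
  shows "card {z \<in> set w. z < x} \<le> card {z \<in> set w. z < y}"
  by (rule card_mono) (use assms in auto)

lemma red_less_iff:
  assumes "i < length w" "j < length w"
  shows "red w ! i < red w ! j \<longleftrightarrow> w ! i < w ! j"
  using assms card_less_strict_mono[of "w ! i" w "w ! j"] card_less_mono[of "w ! j" "w ! i" w]
  by (auto simp: red_def not_less[symmetric])

lemma red_eq_iff:
  assumes "i < length w" "j < length w"
  shows "red w ! i = red w ! j \<longleftrightarrow> w ! i = w ! j"
  using red_less_iff[OF assms] red_less_iff[OF assms(2,1)] by (metis linorder_neq_iff)

lemma card_less_eq_length_remdups_filter:
  "card {y \<in> set w. y < x} = length (remdups (filter (\<lambda>y. y < x) w))"
  by (metis length_remdups_card_conv set_filter)

lemma red_eq_pat_p_iff: "red [a, b, c, d] = pat_p \<longleftrightarrow> a = c \<and> a < b \<and> b < d"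
proof
  assume "red [a, b, c, d] = pat_p"
  then show "a = c \<and> a < b \<and> b < d"
    using red_eq_iff[of 0 "[a, b, c, d]" 2] red_less_iff[of 0 "[a, b, c, d]" 1]
      red_less_iff[of 1 "[a, b, c, d]" 3]
    by (simp add: pat_p_def)
qed (unfold red_def card_less_eq_length_remdups_filter pat_p_def, auto)

lemma red_eq_pat_q_iff: "red [a, b, c, d] = pat_q \<longleftrightarrow> a < b \<and> b = c \<and> c < d"
proof
  assume "red [a, b, c, d] = pat_q"
  then show "a < b \<and> b = c \<and> c < d"
    using red_eq_iff[of 1 "[a, b, c, d]" 2] red_less_iff[of 0 "[a, b, c, d]" 1]
      red_less_iff[of 2 "[a, b, c, d]" 3]
    by (simp add: pat_q_def)
qed (unfold red_def card_less_eq_length_remdups_filter pat_q_def, auto)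

lemma take_4_drop:
  assumes "k + 3 < length xs"
  shows "take 4 (drop k xs) = [xs ! k, xs ! (k + 1), xs ! (k + 2), xs ! (k + 3)]"
  using assms by (simp add: take_Suc_conv_app_nth numeral_eq_Suc)

definition occ_p :: "int list \<Rightarrow> nat \<Rightarrow> bool" where
  "occ_p xs k \<longleftrightarrow> k + 3 < length xs \<and>
     xs ! k = xs ! (k + 2) \<and> xs ! k < xs ! (k + 1) \<and> xs ! (k + 1) < xs ! (k + 3)"

definition occ_q :: "int list \<Rightarrow> nat \<Rightarrow> bool" where
  "occ_q xs k \<longleftrightarrow> k + 3 < length xs \<and>
     xs ! k < xs ! (k + 1) \<and> xs ! (k + 1) = xs ! (k + 2) \<and> xs ! (k + 2) < xs ! (k + 3)"

abbreviation occ_pq :: "int list \<Rightarrow> nat \<Rightarrow> bool" where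
  "occ_pq xs k \<equiv> occ_p xs k \<or> occ_q xs k"

lemma Em_pat_p_eq: "Em pat_p xs = Suc ` {k. occ_p xs k}"
proof -
  have "j \<in> Em pat_p xs \<longleftrightarrow> (\<exists>k. j = Suc k \<and> occ_p xs k)" for j
    by (cases j) (auto simp: Em_def occ_p_def take_4_drop red_eq_pat_p_iff)
  then show ?thesis by auto
qed

lemma Em_pat_q_eq: "Em pat_q xs = Suc ` {k. occ_q xs k}"
proof -
  have "j \<in> Em pat_q xs \<longleftrightarrow> (\<exists>k. j = Suc k \<and> occ_q xs k)" for j
    by (cases j) (auto simp: Em_def occ_q_def take_4_drop red_eq_pat_q_iff)
  then show ?thesis by auto
qed

lemma occ_pq_order:
  assumes "occ_pq xs k"
  shows "k + 3 < length xs" "xs ! k < xs ! (k + 1)" "xs ! (k + 2) \<le> xs ! (k + 1)"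
    "xs ! (k + 2) < xs ! (k + 3)" "xs ! (k + 1) < xs ! (k + 3)"
  using assms by (auto simp: occ_p_def occ_q_def)

lemma not_occ_p_and_occ_q: "\<not> (occ_p xs k \<and> occ_q xs k)"
  by (auto simp: occ_p_def occ_q_def)

lemma occ_pq_not_occ_pq_Suc: "occ_pq xs k \<Longrightarrow> \<not> occ_pq xs (Suc k)"
  using occ_pq_order[of xs k] occ_pq_order[of xs "Suc k"] by force

definition algA_state :: "int list \<Rightarrow> nat \<Rightarrow> int list \<times> int option" where
  "algA_state xs i = fold (algA_step (Em pat_p xs) (Em pat_q xs)) [1..<i + 1] (xs, None)"

abbreviation algA_seq :: "int list \<Rightarrow> nat \<Rightarrow> int list" where
  "algA_seq xs i \<equiv> fst (algA_state xs i)"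

abbreviation algA_last :: "int list \<Rightarrow> nat \<Rightarrow> int option" where
  "algA_last xs i \<equiv> snd (algA_state xs i)"

lemma algA_state_0: "algA_state xs 0 = (xs, None)"
  by (simp add: algA_state_def)

lemma algA_state_Suc:
  "algA_state xs (Suc i) = algA_step (Em pat_p xs) (Em pat_q xs) (Suc i) (algA_state xs i)"
  by (simp add: algA_state_def)

lemma algA_eq_algA_seq: "algA xs = algA_seq xs (length xs)"
  by (simp add: algA_def algA_state_def)

lemma algA_seq_Suc_eq_update: "\<exists>v. algA_seq xs (Suc i) = (algA_seq xs i)[i := v]"
  unfolding algA_state_Suc algA_step_def Let_def
  by (auto split: option.split intro: exI[of _ "algA_seq xs i ! i"])

lemma length_algA_seq: "length (algA_seq xs i) = length xs"
proof (induction i)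
  case (Suc i)
  then show ?case using algA_seq_Suc_eq_update[of xs i] by auto
qed (simp add: algA_state_0)

lemma length_algA: "length (algA xs) = length xs"
  by (simp add: algA_eq_algA_seq length_algA_seq)

lemma algA_seq_nth_ge: "i \<le> j \<Longrightarrow> algA_seq xs i ! j = xs ! j"
proof (induction i)
  case (Suc i)
  then show ?case using algA_seq_Suc_eq_update[of xs i] by auto
qed (simp add: algA_state_0)

lemma algA_seq_nth_stable:
  assumes "j < i" "i \<le> i'"
  shows "algA_seq xs i' ! j = algA_seq xs i ! j"
  using assms(2)
proof (induction i' rule: dec_induct)
  case (step i')
  then show ?case using assms(1) algA_seq_Suc_eq_update[of xs i'] by auto
qed simp

lemma algA_seq_nth_less: "j < i \<Longrightarrow> j < length xs \<Longrightarrow> algA_seq xs i ! j = algA xs ! j"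
  unfolding algA_eq_algA_seq
  using algA_seq_nth_stable[of j "Suc j" i xs] algA_seq_nth_stable[of j "Suc j" "length xs" xs]
  by simp

lemma algA_state_Suc_less_2: "i < 2 \<Longrightarrow> algA_state xs (Suc i) = algA_state xs i"
  by (simp add: algA_state_Suc algA_step_def)

lemma algA_state_window:
  "algA_state xs (k + 3) =
    (let s = algA_seq xs (k + 2); l = algA_last xs (k + 2) in
     if occ_p xs k then (s[k + 2 := s ! (k + 1)], Some (xs ! (k + 2)))
     else if occ_q xs k then (s[k + 2 := s ! k], Some (xs ! (k + 2)))
     else if occ_pq s k then
       (case l of None \<Rightarrow> (s, l) | Some v \<Rightarrow> (s[k + 2 := v], Some (xs ! (k + 2))))
     else (s, l))"
proof -
  have "k + 3 = Suc (k + 2)" by simp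
  then show ?thesis
    unfolding \<open>k + 3 = Suc (k + 2)\<close> algA_state_Suc algA_step_def Let_def Em_pat_p_eq Em_pat_q_eq
    by (simp add: algA_seq_nth_ge image_iff split: option.split)
qed

definition active :: "int list \<Rightarrow> nat \<Rightarrow> bool" where
  "active xs i \<longleftrightarrow> 2 \<le> i \<and> (occ_pq xs (i - 2) \<or> occ_pq (algA_seq xs i) (i - 2))"

lemma algA_nth_not_active:
  assumes "i < length xs" "\<not> active xs i"
  shows "algA xs ! i = xs ! i" "algA_last xs (Suc i) = algA_last xs i"
proof -
  have "algA_state xs (Suc i) = algA_state xs i"
  proof (cases "i < 2")
    case False
    then obtain k where "i = k + 2" by (metis add.commute le_Suc_ex not_less)
    then show ?thesis using assms(2) algA_state_window[of xs k]
      by (simp add: active_def eval_nat_numeral)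
  qed (simp add: algA_state_Suc_less_2)
  then show "algA xs ! i = xs ! i" "algA_last xs (Suc i) = algA_last xs i"
    using algA_seq_nth_less[of i "Suc i" xs] algA_seq_nth_ge[of i i xs] assms(1) by simp_all
qed

lemma algA_nth_window:
  assumes "k + 2 < length xs"
  shows "algA xs ! (k + 2) = algA_seq xs (k + 3) ! (k + 2)"
  using algA_seq_nth_less[of "k + 2" "k + 3" xs] assms by simp

lemma algA_step_p:
  assumes "occ_p xs k"
  shows "algA xs ! (k + 2) = algA xs ! (k + 1)" "algA_last xs (k + 3) = Some (xs ! (k + 2))"
  using assms algA_state_window[of xs k] algA_nth_window[of k xs]
    algA_seq_nth_less[of "k + 1" "k + 2" xs]
  by (auto simp: occ_p_def length_algA_seq)

lemma algA_step_q:
  assumes "occ_q xs k"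
  shows "algA xs ! (k + 2) = algA xs ! k" "algA_last xs (k + 3) = Some (xs ! (k + 2))"
  using assms algA_state_window[of xs k] algA_nth_window[of k xs]
    algA_seq_nth_less[of k "k + 2" xs]
  by (auto simp: occ_p_def occ_q_def length_algA_seq)

lemma algA_step_swap:
  assumes "\<not> occ_pq xs k" "occ_pq (algA_seq xs (k + 2)) k" "algA_last xs (k + 2) = Some v"
  shows "algA xs ! (k + 2) = v" "algA_last xs (k + 3) = Some (xs ! (k + 2))"
proof -
  have "k + 2 < length xs"
    using occ_pq_order(1)[OF assms(2)] by (simp add: length_algA_seq)
  then show "algA xs ! (k + 2) = v" "algA_last xs (k + 3) = Some (xs ! (k + 2))"
    using assms algA_state_window[of xs k] algA_nth_window[of k xs]
    by (simp_all add: Let_def length_algA_seq)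
qed

lemma active_add_2: "active xs (k + 2) \<longleftrightarrow> occ_pq xs k \<or> occ_pq (algA_seq xs (k + 2)) k"
  by (simp add: active_def)

lemma active_cases:
  assumes "active xs i"
  obtains k where "i = k + 2" "occ_p xs k"
    | k where "i = k + 2" "occ_q xs k"
    | k where "i = k + 2" "\<not> occ_pq xs k" "occ_pq (algA_seq xs (k + 2)) k"
  using assms unfolding active_def by (metis le_add_diff_inverse2)

lemma algA_seq_window_nth:
  "algA_seq xs (k + 2) ! k = algA xs ! k" "algA_seq xs (k + 2) ! (k + 1) = algA xs ! (k + 1)"
  "algA_seq xs (k + 2) ! (k + 2) = xs ! (k + 2)" "algA_seq xs (k + 2) ! (k + 3) = xs ! (k + 3)"
  if "k + 3 < length xs"
  using that by (simp_all add: algA_seq_nth_less algA_seq_nth_ge)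

lemma active_nth_less_Suc:
  assumes "active xs i"
  shows "i + 1 < length xs \<and> xs ! i < xs ! (i + 1)"
  using assms
proof (cases rule: active_cases)
  case (3 k)
  have len: "k + 3 < length xs"
    using occ_pq_order(1)[OF 3(3)] by (simp add: length_algA_seq)
  then show ?thesis
    using 3(1) occ_pq_order(4)[OF 3(3)] algA_seq_window_nth[OF len] by (simp add: eval_nat_numeral)
qed (auto simp: occ_p_def occ_q_def eval_nat_numeral)

lemma occ_pq_not_active_Suc: "occ_pq xs k \<Longrightarrow> \<not> active xs (k + 1)"
  using occ_pq_order(3)[of xs k] active_nth_less_Suc[of xs "k + 1"] by force

lemma active_not_active_Suc_if_less:
  assumes "active xs i" "algA xs ! i < xs ! (i + 1)"
  shows "\<not> active xs (Suc i)"
proof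
  assume "active xs (Suc i)"
  then show False
  proof (cases rule: active_cases)
    case (3 k)
    have len: "k + 3 < length xs"
      using occ_pq_order(1)[OF 3(3)] by (simp add: length_algA_seq)
    then show False
      using 3(1) assms(2) occ_pq_order(3)[OF 3(3)] algA_seq_window_nth[OF len] by simp
  qed (use assms active_nth_less_Suc occ_pq_order(3) in force)+
qed

lemma spurious_occ_active_if_less:
  assumes "\<not> occ_pq xs k" "occ_pq (algA_seq xs (k + 2)) k"
    and "active xs (k + 1) \<Longrightarrow> algA xs ! (k + 1) < xs ! (k + 2)"
  shows "active xs k"
proof (rule ccontr)
  assume "\<not> active xs k"
  have len: "k + 3 < length xs"
    using occ_pq_order(1)[OF assms(2)] by (simp add: length_algA_seq)
  have "algA xs ! k = xs ! k"
    using algA_nth_not_active(1) \<open>\<not> active xs k\<close> len by simp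
  moreover have "algA xs ! (k + 1) = xs ! (k + 1)"
  proof (rule algA_nth_not_active(1))
    show "\<not> active xs (k + 1)"
      using assms(3) occ_pq_order(3)[OF assms(2)] algA_seq_window_nth[OF len] by force
  qed (use len in simp)
  ultimately have "occ_pq (algA_seq xs (k + 2)) k \<longleftrightarrow> occ_pq xs k"
    using algA_seq_window_nth[OF len] by (simp add: occ_p_def occ_q_def length_algA_seq)
  then show False using assms(1,2) by simp
qed

text \<open>Premise IH is the induction hypothesis of active_algA_nth_less_and_last, whose proof
  needs this lemma; spurious_occ_swap is the unconditional form.\<close>
lemma spurious_occ_swap_if:
  assumes "\<not> occ_pq xs k" "occ_pq (algA_seq xs (k + 2)) k"
    and IH: "\<And>j. j < k + 2 \<Longrightarrow> active xs j \<Longrightarrow>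
      algA xs ! j < xs ! (j + 1) \<and> algA_last xs (Suc j) = Some (xs ! j)"
  shows "active xs k" "\<not> active xs (k + 1)" "algA xs ! (k + 2) = xs ! k"
    "algA_last xs (k + 3) = Some (xs ! (k + 2))"
proof -
  have len: "k + 3 < length xs"
    using occ_pq_order(1)[OF assms(2)] by (simp add: length_algA_seq)
  show "active xs k"
    using spurious_occ_active_if_less[OF assms(1,2)] IH[of "k + 1"] by simp
  with IH[of k] show "\<not> active xs (k + 1)"
    using active_not_active_Suc_if_less by simp
  then have "algA_last xs (k + 2) = algA_last xs (k + 1)"
    using algA_nth_not_active(2)[of "k + 1" xs] len by simp
  also have "\<dots> = Some (xs ! k)"
    using IH[of k] \<open>active xs k\<close> by simp
  finally show "algA xs ! (k + 2) = xs ! k" "algA_last xs (k + 3) = Some (xs ! (k + 2))"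
    using algA_step_swap[OF assms(1,2)] by simp_all
qed

lemma active_algA_nth_less_and_last:
  assumes "active xs i"
  shows "algA xs ! i < xs ! (i + 1) \<and> algA_last xs (Suc i) = Some (xs ! i)"
  using assms
proof (induction i rule: less_induct)
  case (less i)
  from less.prems show ?case
  proof (cases rule: active_cases)
    case (1 k)
    then have "\<not> active xs (k + 1)" using occ_pq_not_active_Suc by blast
    then have "algA xs ! (k + 1) = xs ! (k + 1)"
      using algA_nth_not_active(1) occ_pq_order(1)[of xs k] 1(2) by simp
    then show ?thesis
      using 1 algA_step_p[OF 1(2)] occ_pq_order(5)[of xs k] by (simp add: eval_nat_numeral)
  next
    case (2 k)
    have "algA xs ! k < xs ! (k + 1)"
    proof (cases "active xs k")
      case False
      then show ?thesis
        using algA_nth_not_active(1) occ_pq_order(1,2)[of xs k] 2(2) by simp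
    qed (use less.IH 2(1) in simp)
    then show ?thesis
      using 2 algA_step_q[OF 2(2)] occ_pq_order(5)[of xs k] by (simp add: occ_q_def eval_nat_numeral)
  next
    case (3 k)
    note swap = spurious_occ_swap_if[OF 3(2,3) less.IH[unfolded 3(1)]]
    have len: "k + 3 < length xs"
      using occ_pq_order(1)[OF 3(3)] by (simp add: length_algA_seq)
    have "algA xs ! (k + 1) = xs ! (k + 1)"
      using algA_nth_not_active(1) swap(2) len by simp
    then have "xs ! (k + 1) < xs ! (k + 3)"
      using occ_pq_order(5)[OF 3(3)] algA_seq_window_nth[OF len] by simp
    then show ?thesis
      using 3(1) swap(3,4) active_nth_less_Suc[OF swap(1)] by (simp add: eval_nat_numeral)
  qed
qed

lemma active_not_active_Suc: "active xs i \<Longrightarrow> \<not> active xs (Suc i)"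
  using active_not_active_Suc_if_less active_algA_nth_less_and_last by blast

lemma spurious_occ_swap:
  assumes "\<not> occ_pq xs k" "occ_pq (algA_seq xs (k + 2)) k"
  shows "active xs k" "\<not> active xs (k + 1)" "algA xs ! (k + 2) = xs ! k"
  using spurious_occ_swap_if[OF assms active_algA_nth_less_and_last] by blast+

lemma occ_pq_algA_nth_less:
  assumes "occ_pq xs k"
  shows "algA xs ! k < xs ! (k + 1)"
proof (cases "active xs k")
  case False
  then show ?thesis
    using algA_nth_not_active(1) occ_pq_order(1,2)[OF assms] by simp
qed (use active_algA_nth_less_and_last in blast)

lemma occ_pq_algA_nth:
  assumes "occ_pq xs k"
  shows "algA xs ! (k + 1) = xs ! (k + 1)" "algA xs ! (k + 3) = xs ! (k + 3)"
proof -
  have len: "k + 3 < length xs" using occ_pq_order(1)[OF assms] .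
  show f1: "algA xs ! (k + 1) = xs ! (k + 1)"
    using algA_nth_not_active(1) occ_pq_not_active_Suc[OF assms] len by simp
  have "algA xs ! (k + 2) \<le> algA xs ! (k + 1)"
    using algA_step_p[of xs k] algA_step_q[of xs k] occ_pq_algA_nth_less[OF assms] f1 assms
    by force
  then have "\<not> occ_pq (algA_seq xs (k + 3)) (k + 1)"
    using occ_pq_order(2)[of "algA_seq xs (k + 3)" "k + 1"]
      algA_seq_nth_less[of "k + 1" "k + 3" xs] algA_seq_nth_less[of "k + 2" "k + 3" xs] len
    by (force simp: eval_nat_numeral)
  then have "\<not> active xs (k + 3)"
    using active_add_2[of xs "k + 1"] occ_pq_not_occ_pq_Suc[OF assms] by (simp add: eval_nat_numeral)
  then show "algA xs ! (k + 3) = xs ! (k + 3)"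
    using algA_nth_not_active(1) len by simp
qed

lemma occ_p_imp_occ_q_algA:
  assumes "occ_p xs k"
  shows "occ_q (algA xs) k"
  using assms occ_pq_algA_nth[of xs k] occ_pq_algA_nth_less[of xs k] algA_step_p[OF assms]
  by (auto simp: occ_p_def occ_q_def length_algA)

lemma occ_q_imp_occ_p_algA:
  assumes "occ_q xs k"
  shows "occ_p (algA xs) k"
  using assms occ_pq_algA_nth[of xs k] occ_pq_algA_nth_less[of xs k] algA_step_q[OF assms]
  by (auto simp: occ_p_def occ_q_def length_algA)

lemma spurious_occ_not_occ_pq_algA:
  assumes "\<not> occ_pq xs k" "occ_pq (algA_seq xs (k + 2)) k"
  shows "\<not> occ_pq (algA xs) k"
proof
  assume occ: "occ_pq (algA xs) k"
  note swap = spurious_occ_swap[OF assms]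
  have len: "k + 3 < length xs"
    using occ_pq_order(1)[OF occ] by (simp add: length_algA)
  have "\<not> active xs (k + 3)"
    using assms(2) active_add_2[of xs k] active_not_active_Suc[of xs "k + 2"]
    by (simp add: eval_nat_numeral)
  then have "algA xs ! (k + 3) = xs ! (k + 3)"
    using algA_nth_not_active(1) len by simp
  moreover have f1: "algA xs ! (k + 1) = xs ! (k + 1)"
    using algA_nth_not_active(1) swap(2) len by simp
  moreover have "xs ! k < xs ! (k + 1)"
    using active_nth_less_Suc[OF swap(1)] by simp
  ultimately have "algA xs ! k = xs ! k"
    using occ swap(3) by (auto simp: occ_p_def occ_q_def)
  then have "occ_pq (algA_seq xs (k + 2)) k \<longleftrightarrow> occ_pq xs k"
    using f1 algA_seq_window_nth[OF len] by (simp add: occ_p_def occ_q_def length_algA_seq)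
  then show False using assms by simp
qed

lemma not_active_not_occ_pq_algA:
  assumes "\<not> active xs (k + 2)"
  shows "\<not> occ_pq (algA xs) k"
proof
  assume occ: "occ_pq (algA xs) k"
  have len: "k + 3 < length xs"
    using occ_pq_order(1)[OF occ] by (simp add: length_algA)
  have f2: "algA xs ! (k + 2) = xs ! (k + 2)"
    using algA_nth_not_active(1) assms len by simp
  show False
  proof (cases "active xs (k + 3)")
    case False
    then have "algA xs ! (k + 3) = xs ! (k + 3)"
      using algA_nth_not_active(1) len by simp
    then have "occ_pq (algA_seq xs (k + 2)) k"
      using occ f2 algA_seq_window_nth[OF len]
      by (simp add: occ_p_def occ_q_def length_algA_seq length_algA)
    then show False using assms active_add_2 by blast
  next
    case True
    then consider "occ_p xs (k + 1)" | "occ_q xs (k + 1)"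
      | "\<not> occ_pq xs (k + 1)" "occ_pq (algA_seq xs (k + 3)) (k + 1)"
      using active_add_2[of xs "k + 1"] by (auto simp: eval_nat_numeral)
    then show False
    proof cases
      case 1
      then show False
        using algA_step_p(1)[OF 1] occ_pq_order(4)[OF occ] by (simp add: eval_nat_numeral)
    next
      case 2
      then show False
        using algA_step_q(1)[OF 2] occ_pq_order(5)[OF occ] by (simp add: eval_nat_numeral)
    next
      case 3
      then have "active xs (k + 1)"
        using spurious_occ_swap(1)[of xs "k + 1"] by (simp add: eval_nat_numeral)
      then show False
        using active_algA_nth_less_and_last f2 occ_pq_order(3)[OF occ] by fastforce
    qed
  qed
qed

lemma not_occ_pq_imp_not_occ_pq_algA: "\<not> occ_pq xs k \<Longrightarrow> \<not> occ_pq (algA xs) k"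
  using spurious_occ_not_occ_pq_algA not_active_not_occ_pq_algA active_add_2 by blast

lemma occ_p_algA_iff: "occ_p (algA xs) k \<longleftrightarrow> occ_q xs k"
  using occ_p_imp_occ_q_algA occ_q_imp_occ_p_algA not_occ_pq_imp_not_occ_pq_algA
    not_occ_p_and_occ_q by blast

lemma occ_q_algA_iff: "occ_q (algA xs) k \<longleftrightarrow> occ_p xs k"
  using occ_p_imp_occ_q_algA occ_q_imp_occ_p_algA not_occ_pq_imp_not_occ_pq_algA
    not_occ_p_and_occ_q by blast

theorem theorem3:
  fixes \<epsilon> :: "int list"
  shows "Em pat_p \<epsilon> = Em pat_q (algA \<epsilon>) \<and> Em pat_q \<epsilon> = Em pat_p (algA \<epsilon>)"
  by (simp add: Em_pat_p_eq Em_pat_q_eq occ_p_algA_iff occ_q_algA_iff)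

end
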